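(* Let $N\ge 0$ and let $\mathcal P\subseteq \Pi=\mathbb C[x_1,\dots,x_s]$ be a degree reducing universal interpolation space of order $N+1$ which is non-redundant, i.e. no proper subspace $\mathcal Q\subsetneq\mathcal P$ is also a degree reducing universal interpolation space of order $N+1$. Then $\mathcal P\subseteq \Pi_N$.
   Context: $\Pi=\mathbb C[x_1,\dots,x_s]$; $\deg p$ denotes total degree, with the convention $\deg 0<0$; $\Pi_N$ is the space of polynomials of total degree at most $N$. A linear subspace $\mathcal P\subseteq\Pi$ is a degree reducing universal interpolation space of order $M$ if for every finite set $X\subset\mathbb C^s$ with $\#X\le M$ and every $q\in\Pi$ there exists $p\in\mathcal P$ with $p(x)=q(x)$ for all $x\in X$ and $\deg p\le\deg q$. *)

theory Defs
  imports Complex_Main "HOL-Library.Poly_Mapping"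
begin

text \<open>Polynomials in s variables over the complex numbers, where the variables are
  indexed by a finite type 'n (so s = CARD('n)).\<close>

type_synonym 'n mpoly = "('n \<Rightarrow>\<^sub>0 nat) \<Rightarrow>\<^sub>0 complex"

definition mono_deg :: "('n \<Rightarrow>\<^sub>0 nat) \<Rightarrow> nat" where
  "mono_deg m = (\<Sum>i\<in>Poly_Mapping.keys m. Poly_Mapping.lookup m i)"

definition mdeg :: "'n mpoly \<Rightarrow> int" where
  "mdeg p = (if p = 0 then -1 else int (Max (mono_deg ` Poly_Mapping.keys p)))"

definition meval :: "'n mpoly \<Rightarrow> ('n \<Rightarrow> complex) \<Rightarrow> complex" where
  "meval p x = (\<Sum>m\<in>Poly_Mapping.keys p. Poly_Mapping.lookup p m * (\<Prod>i\<in>Poly_Mapping.keys m. x i ^ Poly_Mapping.lookup m i))"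

definition cscale :: "complex \<Rightarrow> 'n mpoly \<Rightarrow> 'n mpoly" where
  "cscale c p = Poly_Mapping.map (\<lambda>a. c * a) p"

definition is_subspace :: "'n mpoly set \<Rightarrow> bool" where
  "is_subspace P \<longleftrightarrow> 0 \<in> P \<and> (\<forall>p\<in>P. \<forall>q\<in>P. p + q \<in> P) \<and> (\<forall>c. \<forall>p\<in>P. cscale c p \<in> P)"

definition Pi_deg :: "nat \<Rightarrow> 'n mpoly set" where
  "Pi_deg N = {p. mdeg p \<le> int N}"

definition dr_universal_interp :: "nat \<Rightarrow> 'n mpoly set \<Rightarrow> bool" where
  "dr_universal_interp M P \<longleftrightarrow> is_subspace P \<and>
     (\<forall>X :: ('n \<Rightarrow> complex) set. \<forall>q. finite X \<and> card X \<le> M \<longrightarrow>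
        (\<exists>p\<in>P. (\<forall>x\<in>X. meval p x = meval q x) \<and> mdeg p \<le> mdeg q))"

end

theory Submission
  imports Defs
begin

text \<open>If \<open>P\<close> is a degree reducing universal interpolation space of order \<open>N + 1\<close>, then so is
  \<open>P \<inter> \<Pi>\<^sub>N\<close>: a target \<open>q\<close> of degree at most \<open>N\<close> is served by \<open>P\<close> directly, and a target of
  higher degree may first be replaced by a Lagrange interpolant of degree at most \<open>N\<close> on the at
  most \<open>N + 1\<close> points, which \<open>P\<close> then interpolates without raising the degree. Non-redundancy of
  \<open>P\<close> therefore forces \<open>P = P \<inter> \<Pi>\<^sub>N\<close>.\<close>

definition monom_eval :: "('n \<Rightarrow>\<^sub>0 nat) \<Rightarrow> ('n \<Rightarrow> complex) \<Rightarrow> complex" where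
  "monom_eval m x = (\<Prod>i\<in>Poly_Mapping.keys m. x i ^ Poly_Mapping.lookup m i)"

lemma monom_eval_UNIV:
  "monom_eval (m :: 'n::finite \<Rightarrow>\<^sub>0 nat) x = (\<Prod>i\<in>UNIV. x i ^ Poly_Mapping.lookup m i)"
  unfolding monom_eval_def
  by (rule prod.mono_neutral_left) (auto simp: in_keys_iff)

lemma monom_eval_add:
  "monom_eval ((a :: 'n::finite \<Rightarrow>\<^sub>0 nat) + b) x = monom_eval a x * monom_eval b x"
  by (simp add: monom_eval_UNIV lookup_add power_add prod.distrib)

lemma monom_eval_0 [simp]: "monom_eval 0 x = 1"
  by (simp add: monom_eval_def)

lemma monom_eval_single [simp]: "monom_eval (Poly_Mapping.single i n) x = x i ^ n"
  by (simp add: monom_eval_def)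

lemma meval_eq_sum_superset:
  assumes "finite S" "Poly_Mapping.keys p \<subseteq> S"
  shows "meval p x = (\<Sum>m\<in>S. Poly_Mapping.lookup p m * monom_eval m x)"
  unfolding meval_def monom_eval_def[symmetric]
  by (rule sum.mono_neutral_left) (use assms in \<open>auto simp: in_keys_iff\<close>)

lemma meval_0 [simp]: "meval 0 x = 0"
  by (simp add: meval_def)

lemma meval_single [simp]: "meval (Poly_Mapping.single m c) x = c * monom_eval m x"
  by (simp add: meval_def monom_eval_def)

lemma meval_1 [simp]: "meval 1 x = 1"
  by (simp flip: single_one)

lemma meval_add [simp]: "meval (p + q) x = meval p x + meval q x"
proof -
  let ?S = "Poly_Mapping.keys p \<union> Poly_Mapping.keys q"
  have "meval (p + q) x = (\<Sum>m\<in>?S. Poly_Mapping.lookup (p + q) m * monom_eval m x)"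
    by (rule meval_eq_sum_superset) (auto dest: keys_add[THEN subsetD])
  also have "\<dots> = (\<Sum>m\<in>?S. Poly_Mapping.lookup p m * monom_eval m x)
                  + (\<Sum>m\<in>?S. Poly_Mapping.lookup q m * monom_eval m x)"
    by (simp add: lookup_add distrib_right sum.distrib)
  also have "\<dots> = meval p x + meval q x"
    by (simp add: meval_eq_sum_superset[symmetric])
  finally show ?thesis .
qed

lemma lookup_mult_keys:
  "Poly_Mapping.lookup (p * q) k =
    (\<Sum>(a, b)\<in>Poly_Mapping.keys p \<times> Poly_Mapping.keys q.
        Poly_Mapping.lookup p a * Poly_Mapping.lookup q b when k = a + b)"
proof -
  have "Poly_Mapping.lookup (p * q) k = prod_fun (Poly_Mapping.lookup p) (Poly_Mapping.lookup q) k"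
    by transfer simp
  also have "\<dots> = (\<Sum>(a, b). Poly_Mapping.lookup p a * Poly_Mapping.lookup q b when k = a + b)"
    by (rule prod_fun_unfold_prod) auto
  also have "\<dots> = (\<Sum>(a, b)\<in>Poly_Mapping.keys p \<times> Poly_Mapping.keys q.
        Poly_Mapping.lookup p a * Poly_Mapping.lookup q b when k = a + b)"
    by (rule Sum_any.expand_superset) (auto simp: in_keys_iff)
  finally show ?thesis .
qed

lemma meval_mult [simp]: "meval (p * (q :: 'n::finite mpoly)) x = meval p x * meval q x"
proof -
  let ?c = "\<lambda>(a, b). Poly_Mapping.lookup p a * Poly_Mapping.lookup q b"
  let ?A = "Poly_Mapping.keys p \<times> Poly_Mapping.keys q"
  let ?K = "(\<lambda>(a, b). a + b) ` ?A"
  have "Poly_Mapping.keys (p * q) \<subseteq> ?K"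
    using keys_mult[of p q] by auto
  then have "meval (p * q) x = (\<Sum>k\<in>?K. Poly_Mapping.lookup (p * q) k * monom_eval k x)"
    by (intro meval_eq_sum_superset) simp_all
  also have "\<dots> = (\<Sum>k\<in>?K. \<Sum>ab\<in>?A. ?c ab * monom_eval k x when k = fst ab + snd ab)"
    by (simp add: lookup_mult_keys sum_distrib_right case_prod_unfold when_mult)
  also have "\<dots> = (\<Sum>ab\<in>?A. \<Sum>k\<in>?K. ?c ab * monom_eval k x when k = fst ab + snd ab)"
    by (rule sum.swap)
  also have "\<dots> = (\<Sum>ab\<in>?A. ?c ab * monom_eval (fst ab + snd ab) x)"
    by (intro sum.cong refl) (force simp: when_def sum.delta')
  also have "\<dots> = meval p x * meval q x"
    by (simp add: meval_def monom_eval_def[symmetric] monom_eval_add sum_product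
          sum.cartesian_product case_prod_unfold mult_ac)
  finally show ?thesis .
qed

lemma meval_prod: "meval (\<Prod>z\<in>S. F z :: 'n::finite mpoly) x = (\<Prod>z\<in>S. meval (F z) x)"
  by (induction S rule: infinite_finite_induct) auto

lemma meval_sum: "meval (\<Sum>z\<in>S. F z :: 'n::finite mpoly) x = (\<Sum>z\<in>S. meval (F z) x)"
  by (induction S rule: infinite_finite_induct) auto

lemma mem_Pi_deg_iff: "p \<in> Pi_deg k \<longleftrightarrow> (\<forall>m\<in>Poly_Mapping.keys p. mono_deg m \<le> k)"
  by (cases "p = 0") (simp_all add: Pi_deg_def mdeg_def Max_le_iff)

lemma mono_deg_UNIV: "mono_deg (m :: 'n::finite \<Rightarrow>\<^sub>0 nat) = (\<Sum>i\<in>UNIV. Poly_Mapping.lookup m i)"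
  unfolding mono_deg_def
  by (rule sum.mono_neutral_left) (auto simp: in_keys_iff)

lemma mono_deg_add: "mono_deg ((a :: 'n::finite \<Rightarrow>\<^sub>0 nat) + b) = mono_deg a + mono_deg b"
  by (simp add: mono_deg_UNIV lookup_add sum.distrib)

lemma Pi_deg_mono: "a \<le> b \<Longrightarrow> Pi_deg a \<subseteq> Pi_deg b"
  by (auto simp: Pi_deg_def)

lemma Pi_deg_add: "p \<in> Pi_deg k \<Longrightarrow> q \<in> Pi_deg k \<Longrightarrow> p + q \<in> Pi_deg k"
  unfolding mem_Pi_deg_iff using keys_add[of p q] by blast

lemma Pi_deg_mult:
  "p \<in> Pi_deg a \<Longrightarrow> (q :: 'n::finite mpoly) \<in> Pi_deg b \<Longrightarrow> p * q \<in> Pi_deg (a + b)"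
  unfolding mem_Pi_deg_iff using keys_mult[of p q]
  by (force simp: mono_deg_add intro: add_mono)

lemma const_in_Pi_deg: "Poly_Mapping.single 0 c \<in> Pi_deg k"
  by (simp add: mem_Pi_deg_iff mono_deg_def)

lemma var_in_Pi_deg: "Poly_Mapping.single (Poly_Mapping.single i 1) c \<in> Pi_deg 1"
  by (simp add: mem_Pi_deg_iff mono_deg_def)

lemma Pi_deg_sum: "(\<And>z. z \<in> S \<Longrightarrow> F z \<in> Pi_deg k) \<Longrightarrow> (\<Sum>z\<in>S. F z :: 'n mpoly) \<in> Pi_deg k"
  by (induction S rule: infinite_finite_induct)
    (auto simp: Pi_deg_add const_in_Pi_deg[of 0, simplified])

lemma Pi_deg_prod:
  "finite S \<Longrightarrow> (\<And>z. z \<in> S \<Longrightarrow> F z \<in> Pi_deg 1) \<Longrightarrow> (\<Prod>z\<in>S. F z :: 'n::finite mpoly) \<in> Pi_deg (card S)"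
proof (induction S rule: finite_induct)
  case empty
  show ?case using const_in_Pi_deg[of 1] by (simp add: single_one)
next
  case (insert a S)
  then show ?case using Pi_deg_mult[of "F a" 1 "\<Prod>z\<in>S. F z" "card S"] by simp
qed

lemma Pi_deg_const_mult:
  "(p :: 'n::finite mpoly) \<in> Pi_deg k \<Longrightarrow> Poly_Mapping.single 0 c * p \<in> Pi_deg k"
  using Pi_deg_mult[OF const_in_Pi_deg[of c 0]] by simp

lemma is_subspace_Pi_deg: "is_subspace (Pi_deg k :: 'n::finite mpoly set)"
  unfolding is_subspace_def cscale_def mult_map_scale_conv_mult
  using const_in_Pi_deg[of 0] by (auto intro: Pi_deg_add Pi_deg_const_mult)

lemma is_subspace_Int: "is_subspace P \<Longrightarrow> is_subspace Q \<Longrightarrow> is_subspace (P \<inter> Q)"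
  by (simp add: is_subspace_def)

definition separating_affine :: "('n \<Rightarrow> complex) \<Rightarrow> ('n \<Rightarrow> complex) \<Rightarrow> 'n mpoly" where
  "separating_affine y z = (let i = (SOME i. y i \<noteq> z i) in
     Poly_Mapping.single 0 (1 / (y i - z i)) *
       (Poly_Mapping.single (Poly_Mapping.single i 1) 1 + Poly_Mapping.single 0 (- z i)))"

lemma separating_affine:
  assumes "y \<noteq> (z :: 'n::finite \<Rightarrow> complex)"
  shows "meval (separating_affine y z) y = 1"
    and "meval (separating_affine y z) z = 0"
    and "separating_affine y z \<in> Pi_deg 1"
proof -
  define i where "i = (SOME i. y i \<noteq> z i)"
  have "y i \<noteq> z i"
    unfolding i_def by (rule someI_ex) (use assms in auto)
  moreover have "meval (separating_affine y z) w = (w i - z i) / (y i - z i)" for w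
    by (simp add: separating_affine_def i_def[symmetric] Let_def)
  ultimately show "meval (separating_affine y z) y = 1" "meval (separating_affine y z) z = 0"
    by simp_all
  show "separating_affine y z \<in> Pi_deg 1"
    unfolding separating_affine_def Let_def
    using Pi_deg_mult[OF const_in_Pi_deg Pi_deg_add[OF var_in_Pi_deg const_in_Pi_deg]] by simp
qed

lemma lagrange_interpolation:
  fixes X :: "('n::finite \<Rightarrow> complex) set"
  assumes "finite X" "card X \<le> N + 1"
  shows "\<exists>r\<in>Pi_deg N. \<forall>x\<in>X. meval r x = f x"
proof -
  define L where "L y = (\<Prod>z\<in>X - {y}. separating_affine y z)" for y
  define r where "r = (\<Sum>y\<in>X. Poly_Mapping.single 0 (f y) * L y)"
  have L_at_y: "meval (L y) y = 1" for y
    unfolding L_def meval_prod by (rule prod.neutral) (auto intro!: separating_affine)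
  have L_at_other: "meval (L y) w = 0" if "w \<in> X" "w \<noteq> y" for y w
    using that assms(1) by (auto simp: L_def meval_prod separating_affine intro!: prod_zero bexI[of _ w])
  have "meval r w = f w" if "w \<in> X" for w
  proof -
    have "meval r w = (\<Sum>y\<in>X. f y * meval (L y) w)"
      by (simp add: r_def meval_sum)
    also have "\<dots> = (\<Sum>y\<in>X. if y = w then f y else 0)"
      by (rule sum.cong) (auto simp: L_at_y L_at_other that)
    also have "\<dots> = f w"
      using assms(1) that by simp
    finally show ?thesis .
  qed
  moreover have "r \<in> Pi_deg N"
    unfolding r_def
  proof (rule Pi_deg_sum)
    fix y assume "y \<in> X"
    then have "card (X - {y}) \<le> N"
      using assms by (simp add: card_Diff_singleton)
    moreover have "L y \<in> Pi_deg (card (X - {y}))"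
      unfolding L_def using assms(1) by (intro Pi_deg_prod separating_affine(3)) auto
    ultimately have "L y \<in> Pi_deg N"
      using Pi_deg_mono by blast
    then show "Poly_Mapping.single 0 (f y) * L y \<in> Pi_deg N"
      by (rule Pi_deg_const_mult)
  qed
  ultimately show ?thesis by blast
qed

lemma dr_universal_interp_Int_Pi_deg:
  fixes P :: "'n::finite mpoly set"
  assumes P: "dr_universal_interp M P" and "M \<le> N + 1"
  shows "dr_universal_interp M (P \<inter> Pi_deg N)"
  unfolding dr_universal_interp_def
proof (intro conjI allI impI)
  show "is_subspace (P \<inter> Pi_deg N)"
    using P by (simp add: dr_universal_interp_def is_subspace_Int is_subspace_Pi_deg)
next
  fix X :: "('n \<Rightarrow> complex) set" and q
  assume X: "finite X \<and> card X \<le> M"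
  have P_interp: "\<exists>p\<in>P. (\<forall>x\<in>X. meval p x = meval q' x) \<and> mdeg p \<le> mdeg q'" for q'
    using P X by (auto simp: dr_universal_interp_def)
  show "\<exists>p\<in>P \<inter> Pi_deg N. (\<forall>x\<in>X. meval p x = meval q x) \<and> mdeg p \<le> mdeg q"
  proof (cases "q \<in> Pi_deg N")
    case True
    then show ?thesis
      using P_interp[of q] by (auto simp: Pi_deg_def)
  next
    case False
    obtain r where "r \<in> Pi_deg N" and r: "\<forall>x\<in>X. meval r x = meval q x"
      using lagrange_interpolation[of X N "meval q"] X \<open>M \<le> N + 1\<close> by auto
    with False show ?thesis
      using P_interp[of r] by (force simp: Pi_deg_def)
  qed
qed

theorem lemma14:
  fixes P :: "'n::finite mpoly set" and N :: nat
  assumes "dr_universal_interp (N + 1) P"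
    and "\<forall>Q. Q \<subset> P \<longrightarrow> \<not> dr_universal_interp (N + 1) Q"
  shows "P \<subseteq> Pi_deg N"
proof -
  have "dr_universal_interp (N + 1) (P \<inter> Pi_deg N)"
    using assms(1) by (rule dr_universal_interp_Int_Pi_deg) simp
  with assms(2) have "\<not> P \<inter> Pi_deg N \<subset> P"
    by blast
  then show ?thesis
    by blast
qed

end
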